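(* Let $\delta>0$ and $n\in\mathbb N$ with $n\delta=1$. For every $u\in U^n_\#(\delta\mathbb Z)$, \[ |u|_{H^{-1}}\le\frac1{2\sqrt3}\|u\|_{L^2}. \]
   Context: For $\delta>0$, $n\in\mathbb N$, set $X_i=\delta i$. $U^n_\#(\delta\mathbb Z)$ is the space of functions $u:\delta\mathbb Z\to\mathbb R$ with $u(X_{i+n})=u(X_i)$ for all $i$ and $\frac1n\sum_{i=1}^nu(X_i)=0$. $\langle u,v\rangle=\frac1n\sum_{i=1}^nu(X_i)v(X_i)$, $\|u\|_{L^2}=\langle u,u\rangle^{1/2}$, $Du(X_i)=(u(X_{i+1})-u(X_i))/\delta$, $|u|_{H^1}=\|Du\|_{L^2}$, $|u|_{H^{-1}}=\sup\{\langle u,w\rangle/|w|_{H^1}:0\ne w\in U^n_\#(\delta\mathbb Z)\}$. *)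

theory Defs
  imports Complex_Main
begin

text \<open>Grid functions u on delta*Z are represented by their values at the
grid points X_i = delta*i, i.e. as functions int => real (u i = u(X_i)).\<close>

definition Uper :: "nat \<Rightarrow> (int \<Rightarrow> real) set" where
  "Uper n = {u. (\<forall>i. u (i + int n) = u i) \<and> (1 / real n) * (\<Sum>i=1..int n. u i) = 0}"

definition ip :: "nat \<Rightarrow> (int \<Rightarrow> real) \<Rightarrow> (int \<Rightarrow> real) \<Rightarrow> real" where
  "ip n u v = (1 / real n) * (\<Sum>i=1..int n. u i * v i)"

definition L2norm :: "nat \<Rightarrow> (int \<Rightarrow> real) \<Rightarrow> real" where
  "L2norm n u = sqrt (ip n u u)"

definition Dgrid :: "real \<Rightarrow> (int \<Rightarrow> real) \<Rightarrow> int \<Rightarrow> real" where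
  "Dgrid \<delta> u i = (u (i + 1) - u i) / \<delta>"

definition H1semi :: "real \<Rightarrow> nat \<Rightarrow> (int \<Rightarrow> real) \<Rightarrow> real" where
  "H1semi \<delta> n u = L2norm n (Dgrid \<delta> u)"

text \<open>The supremum is taken over the set of quotients together with 0; for
n >= 2 this does not change the value (the quotient set is symmetric under
w -> -w, hence contains a nonnegative element); for n = 1 the set of nonzero w
is empty and the convention sup of the empty set = 0 is used.\<close>
definition Hm1semi :: "real \<Rightarrow> nat \<Rightarrow> (int \<Rightarrow> real) \<Rightarrow> real" where
  "Hm1semi \<delta> n u = Sup (insert 0 {ip n u w / H1semi \<delta> n w | w. w \<in> Uper n \<and> w \<noteq> (\<lambda>_. 0)})"

end

theory Submission
  imports Defs "HOL-Analysis.Convex"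
begin

text \<open>By Cauchy--Schwarz, \<open>\<langle>u, w\<rangle> \<le> \<parallel>u\<parallel> \<parallel>w\<parallel>\<close>, so it suffices to prove the discrete
  Poincare inequality \<open>\<parallel>w\<parallel> \<le> n\<delta>/(2\<surd>3) |w|\<^sub>H\<^sub>1\<close> for periodic mean-zero \<open>w\<close>.
  Summation by parts, periodicity and the zero mean give
  \<open>n w\<^sub>1 = \<Sum>\<^sub>k (k - (n+1)/2) (w\<^sub>k\<^sub>+\<^sub>1 - w\<^sub>k)\<close>; Cauchy--Schwarz together with
  \<open>\<Sum>\<^sub>k (k - (n+1)/2)\<^sup>2 = (n\<^sup>3 - n)/12 \<le> n\<^sup>3/12\<close> bounds \<open>w\<^sub>1\<^sup>2\<close>, and shifting the index
  bounds every other \<open>w\<^sub>j\<^sup>2\<close> in the same way.\<close>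

definition periodic :: "nat \<Rightarrow> (int \<Rightarrow> 'a) \<Rightarrow> bool" where
  "periodic n f \<longleftrightarrow> (\<forall>i. f (i + int n) = f i)"

lemma periodic_shift: "periodic n f \<Longrightarrow> periodic n (\<lambda>i. f (i + s))"
  unfolding periodic_def by (metis add.commute add.left_commute)

lemma periodic_sq_diff:
  fixes w :: "int \<Rightarrow> 'a::comm_ring_1"
  shows "periodic n w \<Longrightarrow> periodic n (\<lambda>k. (w (k + 1) - w k)^2)"
  unfolding periodic_def by (metis add.commute add.left_commute)

lemma Uper_iff:
  assumes "n > 0"
  shows "u \<in> Uper n \<longleftrightarrow> periodic n u \<and> (\<Sum>i=1..int n. u i) = 0"
  using assms by (simp add: Uper_def periodic_def)

lemma sum_int_atLeastAtMost_plus1: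
  fixes f :: "int \<Rightarrow> 'a::comm_monoid_add"
  assumes "m \<ge> 0"
  shows "(\<Sum>i=1..m+1. f i) = (\<Sum>i=1..m. f i) + f (m + 1)"
  using assms atLeastAtMostPlus1_int_conv[of 1 m] by (simp add: add.commute)

lemma sum_int_telescope:
  fixes w :: "int \<Rightarrow> 'a::ab_group_add"
  assumes "m \<ge> 0"
  shows "(\<Sum>k=1..m. w (k + 1) - w k) = w (m + 1) - w 1"
  using assms
  by (induction m rule: int_ge_induct) (simp_all add: sum_int_atLeastAtMost_plus1)

lemma sum_int_by_parts:
  fixes w :: "int \<Rightarrow> 'a::comm_ring_1"
  assumes "m \<ge> 0"
  shows "(\<Sum>k=1..m. of_int k * (w (k + 1) - w k)) = of_int m * w (m + 1) - (\<Sum>k=1..m. w k)"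
  using assms
  by (induction m rule: int_ge_induct) (simp_all add: sum_int_atLeastAtMost_plus1 algebra_simps)

lemma sum_int_of_int:
  assumes "m \<ge> 0"
  shows "(\<Sum>k=1..m. real_of_int k) = of_int m * (of_int m + 1) / 2"
  using assms
  by (induction m rule: int_ge_induct) (simp_all add: sum_int_atLeastAtMost_plus1 field_simps)

lemma sum_int_of_int_sq:
  assumes "m \<ge> 0"
  shows "(\<Sum>k=1..m. (real_of_int k)^2) = of_int m * (of_int m + 1) * (2 * of_int m + 1) / 6"
  using assms
  by (induction m rule: int_ge_induct)
     (simp_all add: sum_int_atLeastAtMost_plus1 field_simps power2_eq_square)

lemma sum_int_centered_sq:
  assumes "m \<ge> 0"
  shows "(\<Sum>k=1..m. (real_of_int k - (of_int m + 1) / 2)^2) = (of_int m ^ 3 - of_int m) / 12"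
proof -
  define c :: real where "c = (of_int m + 1) / 2"
  have "(\<Sum>k=1..m. (real_of_int k - c)^2) = (\<Sum>k=1..m. (real_of_int k)^2 - 2 * c * of_int k + c^2)"
    by (rule sum.cong) (auto simp: power2_diff)
  also have "\<dots> = (\<Sum>k=1..m. (real_of_int k)^2) - 2 * c * (\<Sum>k=1..m. of_int k) + of_int m * c^2"
    using assms by (simp add: sum.distrib sum_subtractf sum_distrib_left)
  also have "\<dots> = (of_int m ^ 3 - of_int m) / 12"
    using sum_int_of_int[OF assms] sum_int_of_int_sq[OF assms]
    by (simp add: c_def field_simps power2_eq_square power3_eq_cube)
  finally show ?thesis by (simp add: c_def)
qed

lemma sum_periodic_shift1:
  fixes f :: "int \<Rightarrow> 'a::ab_group_add"
  assumes "periodic n f"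
  shows "(\<Sum>i=1..int n. f (i + 1)) = (\<Sum>i=1..int n. f i)"
proof -
  have "(\<Sum>i=1..int n. f (i + 1) - f i) = 0"
    using sum_int_telescope[of "int n" f] assms by (simp add: periodic_def add.commute)
  then show ?thesis by (simp add: sum_subtractf)
qed

lemma sum_periodic_shift:
  fixes f :: "int \<Rightarrow> 'a::ab_group_add"
  assumes "periodic n f"
  shows "(\<Sum>i=1..int n. f (i + s)) = (\<Sum>i=1..int n. f i)"
proof (induction s rule: int_induct[where k = 0])
  case (step1 s)
  then show ?case
    using sum_periodic_shift1[OF periodic_shift[OF assms, of s]] by (simp add: algebra_simps)
next
  case (step2 s)
  then show ?case
    using sum_periodic_shift1[OF periodic_shift[OF assms, of "s - 1"]] by (simp add: algebra_simps)
qed simp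

lemma discrete_poincare_at_1:
  fixes w :: "int \<Rightarrow> real"
  assumes "n > 0" and per: "periodic n w" and mean: "(\<Sum>i=1..int n. w i) = 0"
  shows "(w 1)^2 \<le> real n / 12 * (\<Sum>k=1..int n. (w (k + 1) - w k)^2)"
proof -
  define c :: real where "c = (real n + 1) / 2"
  define D where "D = (\<Sum>k=1..int n. (w (k + 1) - w k)^2)"
  have "D \<ge> 0"
    unfolding D_def by (simp add: sum_nonneg)
  have wrap: "w (int n + 1) = w 1"
    using per by (metis periodic_def add.commute)
  have "real n * w 1 = (\<Sum>k=1..int n. of_int k * (w (k + 1) - w k))"
    using sum_int_by_parts[of "int n" w] wrap mean by simp
  also have "\<dots> = (\<Sum>k=1..int n. of_int k * (w (k + 1) - w k)) - c * (\<Sum>k=1..int n. w (k + 1) - w k)"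
    \<comment> \<open>the telescoping sum vanishes; subtracting it centres the weights, which minimises the
      Cauchy--Schwarz constant\<close>
    using sum_int_telescope[of "int n" w] wrap by simp
  also have "\<dots> = (\<Sum>k=1..int n. (of_int k - c) * (w (k + 1) - w k))"
    by (simp add: sum_distrib_left algebra_simps flip: sum_subtractf)
  finally have "(real n * w 1)^2 \<le> (\<Sum>k=1..int n. (of_int k - c)^2) * D"
    unfolding D_def by (metis Cauchy_Schwarz_ineq_sum)
  also have "\<dots> = (real n ^ 3 - real n) / 12 * D"
    using sum_int_centered_sq[of "int n"] by (simp add: c_def)
  also have "\<dots> \<le> real n ^ 2 * (real n / 12 * D)"
    using \<open>D \<ge> 0\<close> by (simp add: power2_eq_square power3_eq_cube field_simps)
  finally show ?thesis
    using \<open>n > 0\<close> by (simp add: D_def power_mult_distrib)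
qed

lemma discrete_poincare:
  fixes w :: "int \<Rightarrow> real"
  assumes "n > 0" and per: "periodic n w" and mean: "(\<Sum>i=1..int n. w i) = 0"
  shows "(\<Sum>j=1..int n. (w j)^2) \<le> real n ^ 2 / 12 * (\<Sum>k=1..int n. (w (k + 1) - w k)^2)"
proof -
  define D where "D = (\<Sum>k=1..int n. (w (k + 1) - w k)^2)"
  have pointwise: "(w j)^2 \<le> real n / 12 * D" for j
  proof -
    define v where "v = (\<lambda>i. w (i + (j - 1)))"
    have "periodic n v"
      unfolding v_def by (rule periodic_shift[OF per])
    moreover have "(\<Sum>i=1..int n. v i) = 0"
      unfolding v_def using sum_periodic_shift[OF per, of "j - 1"] mean by simp
    moreover have "(\<Sum>k=1..int n. (v (k + 1) - v k)^2) = D"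
      using sum_periodic_shift[OF periodic_sq_diff[OF per], of "j - 1"]
      unfolding v_def D_def by (simp add: algebra_simps)
    ultimately have "(v 1)^2 \<le> real n / 12 * D"
      using discrete_poincare_at_1[OF \<open>n > 0\<close>, of v] by simp
    then show ?thesis unfolding v_def by simp
  qed
  have "(\<Sum>j=1..int n. (w j)^2) \<le> of_nat (card {1..int n}) * (real n / 12 * D)"
    by (rule sum_bounded_above) (rule pointwise)
  also have "\<dots> = real n ^ 2 / 12 * D"
    by (simp add: power2_eq_square)
  finally show ?thesis unfolding D_def .
qed

lemma ip_self_nonneg: "ip n w w \<ge> 0"
  unfolding ip_def by (simp add: sum_nonneg)

lemma L2norm_nonneg: "L2norm n w \<ge> 0"
  unfolding L2norm_def using ip_self_nonneg by simp

lemma H1semi_nonneg: "H1semi \<delta> n w \<ge> 0"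
  unfolding H1semi_def by (rule L2norm_nonneg)

lemma L2norm_sq: "(L2norm n w)^2 = (\<Sum>i=1..int n. (w i)^2) / real n"
  unfolding L2norm_def real_sqrt_pow2[OF ip_self_nonneg] by (simp add: ip_def power2_eq_square)

lemma H1semi_sq: "(H1semi \<delta> n w)^2 = (\<Sum>k=1..int n. (w (k + 1) - w k)^2) / (real n * \<delta>^2)"
  unfolding H1semi_def L2norm_sq Dgrid_def
  by (simp add: power_divide sum_divide_distrib[symmetric])

lemma ip_le_L2norm_mult: "ip n u w \<le> L2norm n u * L2norm n w"
proof (rule power2_le_imp_le)
  have "(ip n u w)^2 = (\<Sum>i=1..int n. u i * w i)^2 / (real n)^2"
    by (simp add: ip_def power_divide)
  also have "\<dots> \<le> (\<Sum>i=1..int n. (u i)^2) * (\<Sum>i=1..int n. (w i)^2) / (real n)^2"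
    using Cauchy_Schwarz_ineq_sum by (rule divide_right_mono) simp
  also have "\<dots> = (L2norm n u * L2norm n w)^2"
    unfolding power_mult_distrib L2norm_sq by (simp add: power2_eq_square)
  finally show "(ip n u w)^2 \<le> (L2norm n u * L2norm n w)^2" .
qed (simp add: L2norm_nonneg)

lemma L2norm_le_H1semi:
  assumes "\<delta> > 0" and "w \<in> Uper n"
  shows "L2norm n w \<le> real n * \<delta> / (2 * sqrt 3) * H1semi \<delta> n w"
proof (cases "n = 0")
  case True
  then show ?thesis by (simp add: L2norm_def ip_def)
next
  case False
  define D where "D = (\<Sum>k=1..int n. (w (k + 1) - w k)^2)"
  have "periodic n w" "(\<Sum>i=1..int n. w i) = 0"
    using assms(2) False Uper_iff by auto
  then have "(\<Sum>i=1..int n. (w i)^2) \<le> real n ^ 2 / 12 * D"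
    using discrete_poincare False unfolding D_def by blast
  then have "(L2norm n w)^2 \<le> real n / 12 * D"
    unfolding L2norm_sq using False by (simp add: pos_divide_le_eq power2_eq_square mult_ac)
  also have "\<dots> = (real n * \<delta> / (2 * sqrt 3) * H1semi \<delta> n w)^2"
    unfolding power_mult_distrib H1semi_sq D_def[symmetric]
    using False \<open>\<delta> > 0\<close> by (simp add: power_divide power2_eq_square)
  finally show ?thesis
    by (rule power2_le_imp_le) (use \<open>\<delta> > 0\<close> H1semi_nonneg in simp)
qed

lemma Hm1semi_le:
  assumes "K \<ge> 0" and "\<And>w. w \<in> Uper n \<Longrightarrow> ip n u w \<le> K * H1semi \<delta> n w"
  shows "Hm1semi \<delta> n u \<le> K"
  unfolding Hm1semi_def
proof (rule cSup_least)
  fix x assume "x \<in> insert 0 {ip n u w / H1semi \<delta> n w | w. w \<in> Uper n \<and> w \<noteq> (\<lambda>_. 0)}"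
  then consider "x = 0" | w where "x = ip n u w / H1semi \<delta> n w" "w \<in> Uper n"
    by blast
  then show "x \<le> K"
  proof cases
    case 2
    then show ?thesis
      using assms H1semi_nonneg[of \<delta> n w]
      by (cases "H1semi \<delta> n w = 0") (simp_all add: pos_divide_le_eq)
  qed (use assms in simp)
qed simp

theorem lemma9p6:
  fixes \<delta> :: real and n :: nat and u :: "int \<Rightarrow> real"
  assumes "\<delta> > 0" and "real n * \<delta> = 1" and "u \<in> Uper n"
  shows "Hm1semi \<delta> n u \<le> 1 / (2 * sqrt 3) * L2norm n u"
proof (rule Hm1semi_le)
  show "0 \<le> 1 / (2 * sqrt 3) * L2norm n u"
    by (simp add: L2norm_nonneg)
next
  fix w assume "w \<in> Uper n"
  have "ip n u w \<le> L2norm n u * L2norm n w"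
    by (rule ip_le_L2norm_mult)
  also have "\<dots> \<le> L2norm n u * (1 / (2 * sqrt 3) * H1semi \<delta> n w)"
    using L2norm_le_H1semi[OF \<open>\<delta> > 0\<close> \<open>w \<in> Uper n\<close>] \<open>real n * \<delta> = 1\<close>
    by (intro mult_left_mono) (simp_all add: L2norm_nonneg)
  finally show "ip n u w \<le> 1 / (2 * sqrt 3) * L2norm n u * H1semi \<delta> n w"
    by (simp add: algebra_simps)
qed

end
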